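(* For all non-negative integers $p$ and $r$, $$H_{r,p+1/2}=\frac{1}{2^{2r-1}}\binom{2p}{p}^{-1}\binom{2(r+p)}{r+p}\binom{r+p}{r}\left(O_{r+p}-O_p\right).$$
   Context: For complex $x$ not a negative integer, $H_x=\sum_{k\ge1}\left(\frac1k-\frac1{k+x}\right)$, and for complex $x$, $\binom{x}{k}=\frac{x(x-1)\cdots(x-k+1)}{k!}$. Hyperharmonic numbers: for integer $n\ge0$ and complex $q$ with $q-1$ not a negative integer (i.e. $q\notin\{0,-1,-2,\dots\}$), $H_{n,q}=\binom{n+q-1}{n}\left(H_{n+q-1}-H_{q-1}\right)$; also $H_{n,0}=\frac1n$ for $n\ge1$. Equivalently $\sum_{n\ge0}H_{n,q}z^n=\frac{-\ln(1-z)}{(1-z)^q}$, so $H_{0,q}=0$, $H_{n,1}=H_n$, and $H_{n,q}=\sum_{i=1}^nH_{i,q-1}$. The odd harmonic numbers are $O_n=\sum_{k=1}^n\frac{1}{2k-1}$, $O_0=0$. *)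

theory Defs
  imports "HOL-Analysis.Analysis"
begin

definition gen_harm :: "complex \<Rightarrow> complex" where
  "gen_harm x = (\<Sum>k. 1 / of_nat (Suc k) - 1 / (of_nat (Suc k) + x))"

definition hyperharm :: "nat \<Rightarrow> complex \<Rightarrow> complex" where
  "hyperharm n q =
     (if q = 0 then 1 / of_nat n
      else ((of_nat n + q - 1) gchoose n) * (gen_harm (of_nat n + q - 1) - gen_harm (q - 1)))"

definition odd_harm :: "nat \<Rightarrow> real" where
  "odd_harm n = (\<Sum>k=1..n. 1 / (2 * real k - 1))"

end

theory Submission
  imports Defs
begin

text \<open>Since \<open>H\<^sub>x\<close> is the digamma function shifted by one, the hyperharmonic number
  \<open>H\<^sub>r\<^sub>,\<^sub>q\<close> equals \<open>pochhammer q r / r!\<close> times \<open>\<Sum>j<r. 1/(q+j)\<close>. For \<open>q = p + 1/2\<close> the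
  rising factorial is a ratio of factorials, and each term \<open>1/(q+j) = 2/(2(p+j)+1)\<close> is twice a
  term of the odd harmonic numbers; rewriting both factors gives the formula.\<close>

lemma gen_harm_eq_Digamma: "gen_harm x = Digamma (x + 1) + euler_mascheroni"
  unfolding gen_harm_def Digamma_def
  by (simp add: divide_inverse add_ac)

lemma gen_harm_shift_diff:
  fixes q :: complex
  assumes "\<And>j. q + of_nat j \<noteq> 0"
  shows "gen_harm (of_nat n + q - 1) - gen_harm (q - 1) = (\<Sum>j<n. 1 / (q + of_nat j))"
proof (induction n)
  case 0
  then show ?case by simp
next
  case (Suc n)
  have "Digamma (of_nat n + q + 1) = Digamma (of_nat n + q) + 1 / (q + of_nat n)"
    using Digamma_plus1[of "of_nat n + q"] assms[of n] by (simp add: add_ac)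
  then show ?case
    using Suc by (simp add: gen_harm_eq_Digamma add_ac)
qed

lemma hyperharm_eq_pochhammer_sum:
  assumes "\<And>j. q + of_nat j \<noteq> 0"
  shows "hyperharm n q = pochhammer q n / fact n * (\<Sum>j<n. 1 / (q + of_nat j))"
proof -
  have "q \<noteq> 0"
    using assms[of 0] by simp
  then show ?thesis
    by (simp add: hyperharm_def gbinomial_pochhammer' gen_harm_shift_diff[OF assms])
qed

lemma pochhammer_half_shift_mult:
  "pochhammer (of_nat p + 1/2 :: 'a :: field_char_0) r * 4 ^ r * fact (r + p) * fact (2 * p)
     = fact (2 * (r + p)) * fact p"
proof (induction r)
  case 0
  then show ?case by simp
next
  case (Suc r)
  let ?m = "of_nat r + of_nat p :: 'a"
  have fact_Suc: "(fact (Suc r + p) :: 'a) = fact (r + p) * (?m + 1)"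
    by (simp add: algebra_simps)
  have "2 * (Suc r + p) = Suc (Suc (2 * (r + p)))"
    by simp
  then have fact_Suc_Suc:
    "(fact (2 * (Suc r + p)) :: 'a) = fact (2 * (r + p)) * (2 * ?m + 1) * (2 * ?m + 2)"
    by (simp add: algebra_simps)
  have "pochhammer (of_nat p + 1/2 :: 'a) (Suc r) * 4 ^ Suc r * fact (Suc r + p) * fact (2 * p)
     = (pochhammer (of_nat p + 1/2) r * 4 ^ r * fact (r + p) * fact (2 * p))
       * ((?m + 1/2) * 4 * (?m + 1))"
    by (simp add: pochhammer_Suc fact_Suc algebra_simps)
  also have "\<dots> = fact (2 * (r + p)) * fact p * ((?m + 1/2) * 4 * (?m + 1))"
    by (simp only: Suc.IH)
  also have "\<dots> = fact (2 * (Suc r + p)) * fact p"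
    by (simp add: fact_Suc_Suc field_simps)
  finally show ?case .
qed

lemma sum_inverse_half_shift_eq_odd_harm:
  "(\<Sum>j<r. 1 / (of_nat p + 1/2 + of_nat j :: complex))
     = 2 * complex_of_real (odd_harm (r + p) - odd_harm p)"
proof (induction r)
  case 0
  then show ?case by simp
next
  case (Suc r)
  have "odd_harm (Suc (r + p)) = odd_harm (r + p) + 1 / (2 * real (Suc (r + p)) - 1)"
    unfolding odd_harm_def by simp
  moreover have "1 / (of_nat p + 1/2 + of_nat r :: complex)
      = 2 * complex_of_real (1 / (2 * real (Suc (r + p)) - 1))"
    by (simp add: field_simps)
  ultimately show ?case
    using Suc by (simp add: algebra_simps)
qed

theorem lemma6:
  fixes p r :: nat
  shows "hyperharm r (of_nat p + 1/2) =
    complex_of_real ((2::real) powi (- (2 * int r - 1)) / real (2*p choose p)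
      * real (2*(r+p) choose (r+p)) * real ((r+p) choose r)
      * (odd_harm (r+p) - odd_harm p))"
proof -
  have not_pole: "of_nat p + 1/2 + of_nat j \<noteq> (0 :: complex)" for j
  proof
    assume "of_nat p + 1/2 + of_nat j = (0 :: complex)"
    then have "Re (of_nat p + 1/2 + of_nat j) = 0"
      by simp
    then show False
      by simp
  qed
  have pochhammer_eq: "pochhammer (of_nat p + 1/2 :: complex) r
      = fact (2 * (r + p)) * fact p / (4 ^ r * fact (r + p) * fact (2 * p))"
    using pochhammer_half_shift_mult[of p r] by (simp add: field_simps)
  have "(2::real) powi int (2 * r) = 4 ^ r"
    by (simp only: power_int_of_nat power_mult) simp
  moreover have "- (2 * int r - 1) = 1 - int (2 * r)"
    by simp
  ultimately have power_eq: "(2::real) powi (- (2 * int r - 1)) = 2 / 4 ^ r"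
    by (simp add: power_int_diff)
  show ?thesis
    unfolding hyperharm_eq_pochhammer_sum[OF not_pole] sum_inverse_half_shift_eq_odd_harm
      pochhammer_eq power_eq
    by (simp add: binomial_fact field_simps)
qed

end
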